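(* Let $N$ be a finitely generated, semipositive binoid, $\mathfrak n$ an $N_+$-primary ideal of $N$ and $T$ a finitely generated $N$-set. Suppose there is a constant $C$ with $\operatorname{HKF}(\mathfrak n,N,q)\le Cq^{\dim N}$ for all $q\in\mathbb N_+$. Then there is a constant $\alpha$ with $\operatorname{HKF}(\mathfrak n,T,q)\le\alpha q^{\dim N}$ for all $q\in\mathbb N_+$.
   Context: A binoid $(N,+,0,\infty)$ is a commutative monoid $(N,+,0)$ with an element $\infty$ satisfying $a+\infty=\infty$ for all $a\in N$. Write $N^\times$ for the group of units of $N$ and $N_+=N\setminus N^\times$. $N$ is finitely generated if it is finitely generated as a monoid; semipositive if $N\neq\{\infty\}$ and $N^\times$ is finite. An ideal of $N$ is a nonempty subset $I\subseteq N$ with $I+N\subseteq I$ (so $\infty\in I$). For an ideal $I$ and $q\in\mathbb N_+$, $[q]I$ denotes the ideal generated by $\{qa: a\in I\}$. An ideal $\mathfrak n$ is $N_+$-primary if $\mathfrak n\subseteq N_+$ and for every $a\in N_+$ there is $k\ge1$ with $ka\in\mathfrak n$. A prime ideal is an ideal $\mathfrak p\neq N$ such that $a+b\in\mathfrak p$ implies $a\in\mathfrak p$ or $b\in\mathfrak p$; the (combinatorial) dimension $\dim N$ is the supremum of the lengths $k$ of chains $\mathfrak p_0\subsetneq\cdots\subsetneq\mathfrak p_k$ of prime ideals. An $N$-set is a pointed set $(S,p)$ with a map $N\times S\to S$, $(n,s)\mapsto n+s$, such that $(n+m)+s=n+(m+s)$, $0+s=s$, $\infty+s=p$ and $n+p=p$.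 It is finitely generated if there are $s_1,\dots,s_r\in S$ with $S=\bigcup_j (N+s_j)$. $N$ itself is an $N$-set with distinguished point $\infty$. For an ideal $J$ and an $N$-set $T$, $J+T=\{a+t:a\in J,t\in T\}$ is an $N$-subset; for an $N$-subset $S\subseteq T$ (a subset containing $p$ and stable under the action), the quotient $T/S$ is the $N$-set $(T\setminus S)\cup\{p\}$. For a finite pointed set $S$ we write $\#S=|S|-1$. For $N$ finitely generated and semipositive, $T$ a finitely generated $N$-set, $\mathfrak n$ an $N_+$-primary ideal and $q\in\mathbb N_+$, the Hilbert–Kunz function is $\operatorname{HKF}(\mathfrak n,T,q)=\#\,T/([q]\mathfrak n+T)$. *)

theory Defs
  imports Complex_Main
begin

text \<open>A binoid is represented by a carrier N, an operation f (written +),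
  a neutral element z (written 0) and an absorbing element w (written \<infinity>).\<close>

definition binoid :: "'a set \<Rightarrow> ('a \<Rightarrow> 'a \<Rightarrow> 'a) \<Rightarrow> 'a \<Rightarrow> 'a \<Rightarrow> bool" where
  "binoid N f z w \<longleftrightarrow>
     z \<in> N \<and> w \<in> N \<and> (\<forall>a\<in>N. \<forall>b\<in>N. f a b \<in> N) \<and>
     (\<forall>a\<in>N. \<forall>b\<in>N. \<forall>c\<in>N. f (f a b) c = f a (f b c)) \<and>
     (\<forall>a\<in>N. \<forall>b\<in>N. f a b = f b a) \<and>
     (\<forall>a\<in>N. f a z = a) \<and>
     (\<forall>a\<in>N. f a w = w)"

inductive_set monoid_gen :: "('a \<Rightarrow> 'a \<Rightarrow> 'a) \<Rightarrow> 'a \<Rightarrow> 'a set \<Rightarrow> 'a set"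
  for f :: "'a \<Rightarrow> 'a \<Rightarrow> 'a" and z :: 'a and G :: "'a set" where
  gen_zero: "z \<in> monoid_gen f z G"
| gen_base: "g \<in> G \<Longrightarrow> g \<in> monoid_gen f z G"
| gen_add: "a \<in> monoid_gen f z G \<Longrightarrow> b \<in> monoid_gen f z G \<Longrightarrow> f a b \<in> monoid_gen f z G"

definition binoid_fin_gen :: "'a set \<Rightarrow> ('a \<Rightarrow> 'a \<Rightarrow> 'a) \<Rightarrow> 'a \<Rightarrow> bool" where
  "binoid_fin_gen N f z \<longleftrightarrow> (\<exists>G. finite G \<and> G \<subseteq> N \<and> N = monoid_gen f z G)"

definition binoid_units :: "'a set \<Rightarrow> ('a \<Rightarrow> 'a \<Rightarrow> 'a) \<Rightarrow> 'a \<Rightarrow> 'a set" where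
  "binoid_units N f z = {a \<in> N. \<exists>b\<in>N. f a b = z}"

definition binoid_plus :: "'a set \<Rightarrow> ('a \<Rightarrow> 'a \<Rightarrow> 'a) \<Rightarrow> 'a \<Rightarrow> 'a set" where
  "binoid_plus N f z = N - binoid_units N f z"

definition semipositive :: "'a set \<Rightarrow> ('a \<Rightarrow> 'a \<Rightarrow> 'a) \<Rightarrow> 'a \<Rightarrow> 'a \<Rightarrow> bool" where
  "semipositive N f z w \<longleftrightarrow> N \<noteq> {w} \<and> finite (binoid_units N f z)"

primrec nsm :: "('a \<Rightarrow> 'a \<Rightarrow> 'a) \<Rightarrow> 'a \<Rightarrow> nat \<Rightarrow> 'a \<Rightarrow> 'a" where
  "nsm f z 0 a = z"
| "nsm f z (Suc k) a = f a (nsm f z k a)"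

definition binoid_ideal :: "'a set \<Rightarrow> ('a \<Rightarrow> 'a \<Rightarrow> 'a) \<Rightarrow> 'a set \<Rightarrow> bool" where
  "binoid_ideal N f I \<longleftrightarrow> I \<noteq> {} \<and> I \<subseteq> N \<and> (\<forall>a\<in>I. \<forall>n\<in>N. f a n \<in> I)"

text \<open>[q]I: the ideal generated by {q a : a \<in> I}, i.e. {q a + n : a \<in> I, n \<in> N}.\<close>
definition frob_ideal :: "'a set \<Rightarrow> ('a \<Rightarrow> 'a \<Rightarrow> 'a) \<Rightarrow> 'a \<Rightarrow> nat \<Rightarrow> 'a set \<Rightarrow> 'a set" where
  "frob_ideal N f z q I = {f (nsm f z q a) n | a n. a \<in> I \<and> n \<in> N}"

definition primary_ideal :: "'a set \<Rightarrow> ('a \<Rightarrow> 'a \<Rightarrow> 'a) \<Rightarrow> 'a \<Rightarrow> 'a set \<Rightarrow> bool" where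
  "primary_ideal N f z I \<longleftrightarrow> binoid_ideal N f I \<and> I \<subseteq> binoid_plus N f z \<and>
     (\<forall>a\<in>binoid_plus N f z. \<exists>k\<ge>1. nsm f z k a \<in> I)"

definition binoid_prime :: "'a set \<Rightarrow> ('a \<Rightarrow> 'a \<Rightarrow> 'a) \<Rightarrow> 'a set \<Rightarrow> bool" where
  "binoid_prime N f P \<longleftrightarrow> binoid_ideal N f P \<and> P \<noteq> N \<and>
     (\<forall>a\<in>N. \<forall>b\<in>N. f a b \<in> P \<longrightarrow> a \<in> P \<or> b \<in> P)"

definition prime_chain_lengths :: "'a set \<Rightarrow> ('a \<Rightarrow> 'a \<Rightarrow> 'a) \<Rightarrow> nat set" where
  "prime_chain_lengths N f = {k. \<exists>Ps :: 'a set list. length Ps = Suc k \<and>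
       (\<forall>i\<le>k. binoid_prime N f (Ps ! i)) \<and> (\<forall>i<k. Ps ! i \<subset> Ps ! Suc i)}"

text \<open>Combinatorial dimension (finite for finitely generated binoids).\<close>
definition binoid_dim :: "'a set \<Rightarrow> ('a \<Rightarrow> 'a \<Rightarrow> 'a) \<Rightarrow> nat" where
  "binoid_dim N f = Sup (prime_chain_lengths N f)"

definition nset :: "'a set \<Rightarrow> ('a \<Rightarrow> 'a \<Rightarrow> 'a) \<Rightarrow> 'a \<Rightarrow> 'a \<Rightarrow> 's set \<Rightarrow> 's \<Rightarrow> ('a \<Rightarrow> 's \<Rightarrow> 's) \<Rightarrow> bool" where
  "nset N f z w S p act \<longleftrightarrow> p \<in> S \<and> (\<forall>n\<in>N. \<forall>s\<in>S. act n s \<in> S) \<and>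
     (\<forall>n\<in>N. \<forall>m\<in>N. \<forall>s\<in>S. act (f n m) s = act n (act m s)) \<and>
     (\<forall>s\<in>S. act z s = s) \<and> (\<forall>s\<in>S. act w s = p) \<and> (\<forall>n\<in>N. act n p = p)"

definition nset_fin_gen :: "'a set \<Rightarrow> 's set \<Rightarrow> ('a \<Rightarrow> 's \<Rightarrow> 's) \<Rightarrow> bool" where
  "nset_fin_gen N S act \<longleftrightarrow> (\<exists>G. finite G \<and> G \<subseteq> S \<and> S = (\<Union>g\<in>G. {act n g | n. n \<in> N}))"

definition ideal_nset :: "'a set \<Rightarrow> 's set \<Rightarrow> ('a \<Rightarrow> 's \<Rightarrow> 's) \<Rightarrow> 's set" where
  "ideal_nset J S act = {act a t | a t. a \<in> J \<and> t \<in> S}"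

text \<open>HKF(n, T, q) = # T/([q]n + T) = |(T \ ([q]n + T)) \<union> {p}| - 1.\<close>
definition HKF :: "'a set \<Rightarrow> ('a \<Rightarrow> 'a \<Rightarrow> 'a) \<Rightarrow> 'a \<Rightarrow> 'a set \<Rightarrow> 's set \<Rightarrow> 's \<Rightarrow> ('a \<Rightarrow> 's \<Rightarrow> 's) \<Rightarrow> nat \<Rightarrow> nat" where
  "HKF N f z I S p act q =
     card ((S - ideal_nset (frob_ideal N f z q I) S act) \<union> {p}) - 1"

end

theory Submission imports Defs begin

text \<open>Write \<open>X\<^sub>q = N \ [q]\<frak>n\<close>. Every element of \<open>T \ ([q]\<frak>n + T)\<close> has the form \<open>a + t\<close>
  with \<open>a \<in> X\<^sub>q\<close> and \<open>t\<close> one of the finitely many generators of \<open>T\<close>, so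
  \<open>HKF(\<frak>n, T, q) \<le> r \<cdot> #X\<^sub>q \<le> r \<cdot> (HKF(\<frak>n, N, q) + 1)\<close>, where \<open>r\<close> is the number of
  generators. The only subtle point is that \<open>X\<^sub>q\<close> must be finite for cardinalities to
  mean anything: writing elements of \<open>N\<close> as a unit plus multiples of the non-unit generators,
  any multiple \<open>c\<cdot>g \<ge> q k\<^sub>g\<cdot>g\<close> with \<open>k\<^sub>g\<cdot>g \<in> \<frak>n\<close> lands in \<open>[q]\<frak>n\<close>, so \<open>X\<^sub>q\<close> is covered
  by finitely many unit-plus-bounded-exponent combinations.\<close>

locale comm_binoid =
  fixes N :: "'a set" and f :: "'a \<Rightarrow> 'a \<Rightarrow> 'a" and z w :: 'a
  assumes binoid: "binoid N f z w"
begin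

lemma zero_closed: "z \<in> N"
  and add_closed: "a \<in> N \<Longrightarrow> b \<in> N \<Longrightarrow> f a b \<in> N"
  and add_assoc: "a \<in> N \<Longrightarrow> b \<in> N \<Longrightarrow> c \<in> N \<Longrightarrow> f (f a b) c = f a (f b c)"
  and add_commute: "a \<in> N \<Longrightarrow> b \<in> N \<Longrightarrow> f a b = f b a"
  and add_zero_right: "a \<in> N \<Longrightarrow> f a z = a"
  and add_zero_left: "a \<in> N \<Longrightarrow> f z a = a"
  using binoid unfolding binoid_def by metis+

lemma add_add_swap:
  assumes "a \<in> N" "b \<in> N" "c \<in> N" "d \<in> N"
  shows "f (f a b) (f c d) = f (f a c) (f b d)"
  using assms by (metis add_assoc add_closed add_commute)

lemma nsm_closed: "a \<in> N \<Longrightarrow> nsm f z k a \<in> N"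
  by (induction k) (auto simp: zero_closed add_closed)

lemma nsm_add: "a \<in> N \<Longrightarrow> nsm f z (m + n) a = f (nsm f z m a) (nsm f z n a)"
  by (induction m) (auto simp: add_assoc nsm_closed add_zero_left)

lemma nsm_mult: "a \<in> N \<Longrightarrow> nsm f z (m * n) a = nsm f z m (nsm f z n a)"
  by (induction m) (auto simp: nsm_add)

lemma zero_unit: "z \<in> binoid_units N f z"
  unfolding binoid_units_def using zero_closed add_zero_right by blast

lemma units_add_closed:
  assumes "u \<in> binoid_units N f z" "v \<in> binoid_units N f z"
  shows "f u v \<in> binoid_units N f z"
proof -
  obtain b b' where "u \<in> N" "v \<in> N" "b \<in> N" "b' \<in> N" "f u b = z" "f v b' = z"
    using assms unfolding binoid_units_def by auto
  moreover from this have "f (f u v) (f b b') = z"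
    by (simp add: add_add_swap add_zero_right zero_closed)
  ultimately show ?thesis
    unfolding binoid_units_def by (blast intro: add_closed)
qed

lemma nsm_unit: "u \<in> binoid_units N f z \<Longrightarrow> nsm f z k u \<in> binoid_units N f z"
  by (induction k) (simp_all add: zero_unit units_add_closed)

definition nsm_sum :: "'a list \<Rightarrow> ('a \<Rightarrow> nat) \<Rightarrow> 'a" where
  "nsm_sum gs c = foldr (\<lambda>g acc. f (nsm f z (c g) g) acc) gs z"

lemma nsm_sum_Nil [simp]: "nsm_sum [] c = z"
  and nsm_sum_Cons [simp]: "nsm_sum (g # gs) c = f (nsm f z (c g) g) (nsm_sum gs c)"
  by (simp_all add: nsm_sum_def)

lemma nsm_sum_closed: "set gs \<subseteq> N \<Longrightarrow> nsm_sum gs c \<in> N"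
  by (induction gs) (auto simp: zero_closed add_closed nsm_closed)

lemma nsm_sum_cong: "(\<And>g. g \<in> set gs \<Longrightarrow> c g = c' g) \<Longrightarrow> nsm_sum gs c = nsm_sum gs c'"
  by (induction gs) auto

lemma nsm_sum_zero: "set gs \<subseteq> N \<Longrightarrow> nsm_sum gs (\<lambda>_. 0) = z"
  by (induction gs) (auto simp: add_zero_right[OF zero_closed] add_zero_left)

lemma nsm_sum_add:
  "set gs \<subseteq> N \<Longrightarrow> nsm_sum gs (\<lambda>g. c g + c' g) = f (nsm_sum gs c) (nsm_sum gs c')"
proof (induction gs)
  case (Cons g gs)
  then show ?case
    using add_add_swap[of "nsm f z (c g) g" "nsm f z (c' g) g" "nsm_sum gs c" "nsm_sum gs c'"]
    by (simp add: nsm_add nsm_closed nsm_sum_closed)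
qed (simp add: add_zero_right zero_closed)

lemma nsm_sum_single:
  assumes "set gs \<subseteq> N" "distinct gs" "g \<in> set gs"
  shows "nsm_sum gs (\<lambda>x. if x = g then k else 0) = nsm f z k g"
  using assms
proof (induction gs)
  case (Cons h gs)
  show ?case
  proof (cases "h = g")
    case True
    with Cons.prems have "nsm_sum gs (\<lambda>x. if x = g then k else 0) = nsm_sum gs (\<lambda>_. 0)"
      by (intro nsm_sum_cong) auto
    also have "\<dots> = z" using Cons.prems by (simp add: nsm_sum_zero)
    finally have "nsm_sum gs (\<lambda>x. if x = g then k else 0) = z" .
    with True Cons.prems show ?thesis by (simp add: add_zero_right nsm_closed)
  next
    case False
    have "g \<in> N" using Cons.prems by auto
    with False Cons show ?thesis by (simp add: add_zero_left nsm_closed)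
  qed
qed simp

lemma nsm_sum_unit:
  "(\<And>g. g \<in> set gs \<Longrightarrow> nsm f z (c g) g \<in> binoid_units N f z)
    \<Longrightarrow> nsm_sum gs c \<in> binoid_units N f z"
  by (induction gs) (auto simp: zero_unit units_add_closed)

lemma monoid_gen_nsm_sum:
  assumes "set gs \<subseteq> N" "distinct gs" "a \<in> monoid_gen f z (set gs)"
  shows "\<exists>c. a = nsm_sum gs c"
  using assms(3)
proof (induction rule: monoid_gen.induct)
  case gen_zero
  then show ?case using nsm_sum_zero[OF assms(1)] by metis
next
  case (gen_base g)
  then have "nsm_sum gs (\<lambda>x. if x = g then 1 else 0) = g"
    using assms nsm_sum_single by (auto simp: add_zero_right)
  then show ?case by metis
next
  case (gen_add a b)
  then show ?case using nsm_sum_add[OF assms(1)] by metis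
qed

lemma nsm_sum_in_frob_ideal:
  assumes gs: "set gs \<subseteq> N" "distinct gs" "g \<in> set gs"
    and I: "I \<subseteq> N" "nsm f z k g \<in> I" and le: "q * k \<le> c g"
  shows "nsm_sum gs c \<in> frob_ideal N f z q I"
proof -
  define c' where "c' = c(g := c g - q * k)"
  have g: "g \<in> N" using gs by auto
  have "c = (\<lambda>x. c' x + (if x = g then q * k else 0))"
    using le by (auto simp: c'_def)
  then have "nsm_sum gs c = f (nsm_sum gs c') (nsm f z (q * k) g)"
    using nsm_sum_add[OF gs(1)] nsm_sum_single[OF gs] by metis
  also have "\<dots> = f (nsm f z q (nsm f z k g)) (nsm_sum gs c')"
    using g gs(1) by (metis add_commute nsm_closed nsm_mult nsm_sum_closed)
  finally show ?thesis
    unfolding frob_ideal_def using I(2) nsm_sum_closed[OF gs(1)] by blast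
qed

lemma finite_diff_frob_ideal:
  assumes "binoid_fin_gen N f z" "semipositive N f z w" "primary_ideal N f z I"
  shows "finite (N - frob_ideal N f z q I)"
proof -
  obtain G where "finite G" "G \<subseteq> N" "N = monoid_gen f z G"
    using assms(1) unfolding binoid_fin_gen_def by blast
  then obtain gs where gs: "set gs \<subseteq> N" "distinct gs" "N = monoid_gen f z (set gs)"
    using finite_distinct_list by metis
  define U where "U = binoid_units N f z"
  have I: "I \<subseteq> N" using assms(3) unfolding primary_ideal_def binoid_ideal_def by blast
  have "\<exists>k. nsm f z k g \<in> I" if "g \<in> set gs" "g \<notin> U" for g
    using assms(3) that gs(1) unfolding primary_ideal_def binoid_plus_def U_def by blast
  then obtain k where k: "\<And>g. g \<in> set gs \<Longrightarrow> g \<notin> U \<Longrightarrow> nsm f z (k g) g \<in> I"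
    by metis
  define K where "K = q * sum k (set gs) + 1"
  define CS where "CS = {c. \<forall>x. (x \<in> set gs \<longrightarrow> c x \<in> {..<K}) \<and> (x \<notin> set gs \<longrightarrow> c x = 0)}"
  have "N - frob_ideal N f z q I \<subseteq> (\<lambda>(u, c). f u (nsm_sum gs c)) ` (U \<times> CS)"
  proof
    fix a assume a: "a \<in> N - frob_ideal N f z q I"
    then obtain c where c: "a = nsm_sum gs c"
      using monoid_gen_nsm_sum gs by blast
    define cu where "cu x = (if x \<in> U then c x else 0)" for x
    define cn where "cn x = (if x \<in> set gs \<and> x \<notin> U then c x else 0)" for x
    have "a = f (nsm_sum gs cu) (nsm_sum gs (\<lambda>x. if x \<in> U then 0 else c x))"
      unfolding c nsm_sum_add[OF gs(1), symmetric] by (rule nsm_sum_cong) (simp add: cu_def)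
    also have "nsm_sum gs (\<lambda>x. if x \<in> U then 0 else c x) = nsm_sum gs cn"
      by (rule nsm_sum_cong) (simp add: cn_def)
    finally have "a = f (nsm_sum gs cu) (nsm_sum gs cn)" .
    moreover have "nsm_sum gs cu \<in> U"
      unfolding U_def by (rule nsm_sum_unit) (auto simp: cu_def nsm_unit zero_unit U_def)
    moreover have "cn x < K" if "x \<in> set gs" for x
    proof (cases "x \<in> U")
      case False
      then have "\<not> q * k x \<le> c x"
        using nsm_sum_in_frob_ideal[OF gs(1,2) that I k[OF that False]] a c by blast
      then have "c x < q * k x" by simp
      also have "\<dots> \<le> q * sum k (set gs)" using that by (simp add: member_le_sum)
      finally show ?thesis using False that by (simp add: cn_def K_def)
    qed (simp add: cn_def K_def)
    then have "cn \<in> CS" unfolding CS_def by (auto simp: cn_def)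
    ultimately show "a \<in> (\<lambda>(u, c). f u (nsm_sum gs c)) ` (U \<times> CS)"
      by (intro rev_image_eqI[of "(nsm_sum gs cu, cn)"]) auto
  qed
  moreover have "finite CS"
    unfolding CS_def by (rule finite_set_of_finite_funs) auto
  moreover have "finite U" using assms(2) unfolding semipositive_def U_def by simp
  ultimately show ?thesis by (blast intro: finite_subset finite_cartesian_product)
qed

lemma ideal_nset_frob_ideal:
  assumes "I \<subseteq> N"
  shows "ideal_nset (frob_ideal N f z q I) N f = frob_ideal N f z q I"
proof
  show "ideal_nset (frob_ideal N f z q I) N f \<subseteq> frob_ideal N f z q I"
    unfolding ideal_nset_def frob_ideal_def using assms
    by (force simp: add_assoc nsm_closed add_closed)
  show "frob_ideal N f z q I \<subseteq> ideal_nset (frob_ideal N f z q I) N f"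
  proof
    fix a assume a: "a \<in> frob_ideal N f z q I"
    then have "a = f a z"
      unfolding frob_ideal_def using assms by (auto simp: add_zero_right nsm_closed add_closed)
    with a show "a \<in> ideal_nset (frob_ideal N f z q I) N f"
      unfolding ideal_nset_def using zero_closed by blast
  qed
qed

lemma card_diff_frob_ideal_le_HKF:
  assumes "I \<subseteq> N" "finite (N - frob_ideal N f z q I)"
  shows "card (N - frob_ideal N f z q I) \<le> HKF N f z I N w f q + 1"
proof -
  have "card (N - frob_ideal N f z q I) \<le> card ((N - frob_ideal N f z q I) \<union> {w})"
    using assms(2) by (intro card_mono) auto
  then show ?thesis
    unfolding HKF_def ideal_nset_frob_ideal[OF assms(1)] by linarith
qed

end

lemma card_diff_ideal_nset_le:
  assumes "finite G" "G \<subseteq> T" "T = (\<Union>g\<in>G. {act n g | n. n \<in> N})" "finite (N - J)"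
  shows "card (T - ideal_nset J T act) \<le> card (N - J) * card G"
proof -
  have "T - ideal_nset J T act \<subseteq> (\<lambda>(n, g). act n g) ` ((N - J) \<times> G)"
  proof
    fix t assume t: "t \<in> T - ideal_nset J T act"
    then obtain n g where "g \<in> G" "n \<in> N" "t = act n g" using assms(3) by blast
    moreover have "n \<notin> J"
      using t \<open>g \<in> G\<close> \<open>t = act n g\<close> assms(2) unfolding ideal_nset_def by blast
    ultimately show "t \<in> (\<lambda>(n, g). act n g) ` ((N - J) \<times> G)" by force
  qed
  then have "card (T - ideal_nset J T act) \<le> card ((\<lambda>(n, g). act n g) ` ((N - J) \<times> G))"
    using assms(1,4) by (intro card_mono) auto
  also have "\<dots> \<le> card ((N - J) \<times> G)"
    using assms(1,4) by (intro card_image_le) auto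
  finally show ?thesis by (simp add: card_cartesian_product)
qed

lemma HKF_le_card_diff: "HKF N f z I T p act q \<le> card (T - ideal_nset (frob_ideal N f z q I) T act)"
  unfolding HKF_def using card_Un_le[of _ "{p}"] by (simp add: le_diff_conv)

theorem mainTheorem12:
  fixes N :: "'a set" and f :: "'a \<Rightarrow> 'a \<Rightarrow> 'a" and z w :: 'a
    and I :: "'a set" and T :: "'s set" and p :: 's and act :: "'a \<Rightarrow> 's \<Rightarrow> 's"
    and C :: real
  assumes "binoid N f z w" and "binoid_fin_gen N f z" and "semipositive N f z w"
    and "primary_ideal N f z I"
    and "nset N f z w T p act" and "nset_fin_gen N T act"
    and "\<forall>q::nat. q \<ge> 1 \<longrightarrow>
           real (HKF N f z I N w f q) \<le> C * real q ^ binoid_dim N f"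
  shows "\<exists>\<alpha>::real. \<forall>q::nat. q \<ge> 1 \<longrightarrow>
           real (HKF N f z I T p act q) \<le> \<alpha> * real q ^ binoid_dim N f"
proof -
  interpret comm_binoid N f z w by (rule comm_binoid.intro) fact
  obtain G where G: "finite G" "G \<subseteq> T" "T = (\<Union>g\<in>G. {act n g | n. n \<in> N})"
    using assms(6) unfolding nset_fin_gen_def by blast
  have I: "I \<subseteq> N" using assms(4) unfolding primary_ideal_def binoid_ideal_def by blast
  have "real (HKF N f z I T p act q) \<le> (card G * (C + 1)) * real q ^ binoid_dim N f"
    if q: "q \<ge> 1" for q
  proof -
    note X_finite = finite_diff_frob_ideal[OF assms(2-4), of q]
    have "HKF N f z I T p act q \<le> card (N - frob_ideal N f z q I) * card G"
      using HKF_le_card_diff card_diff_ideal_nset_le[OF G X_finite] by (rule le_trans)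
    also have "\<dots> \<le> (HKF N f z I N w f q + 1) * card G"
      using card_diff_frob_ideal_le_HKF[OF I X_finite] by (rule mult_le_mono1)
    finally have "HKF N f z I T p act q \<le> (HKF N f z I N w f q + 1) * card G" .
    then have "real (HKF N f z I T p act q) \<le> real ((HKF N f z I N w f q + 1) * card G)"
      by (simp only: of_nat_le_iff)
    also have "\<dots> = (real (HKF N f z I N w f q) + 1) * card G" by (simp add: distrib_right)
    also have "\<dots> \<le> (C * real q ^ binoid_dim N f + real q ^ binoid_dim N f) * card G"
    proof (intro mult_right_mono add_mono)
      show "real (HKF N f z I N w f q) \<le> C * real q ^ binoid_dim N f"
        using assms(7) q by blast
      show "1 \<le> real q ^ binoid_dim N f" using q by simp
    qed simp
    also have "\<dots> = (card G * (C + 1)) * real q ^ binoid_dim N f"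
      by (simp add: algebra_simps)
    finally show ?thesis .
  qed
  then show ?thesis by blast
qed

end
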